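(* Let $(s,\pi)$ be a plane permutation on $[n]$ with $s=(s_0s_1\cdots s_{n-1})$ and diagonal $D=s\circ\pi^{-1}$, let $h=(i,j,k,l)$ with $i\le j<k\le l$ and $\{i,j,k,l\}\subset[n-1]$, and let $(s^h,\pi^h)=\chi_h\circ(s,\pi)$. Then $\pi^h(s_r)=\pi(s_r)$ for every $r\in\{0,1,\ldots,n-1\}\setminus\{i-1,j,k-1,l\}$. Moreover, if $j+1<k$ then $$\pi^h(s_{i-1})=\pi(s_{k-1}),\quad \pi^h(s_j)=\pi(s_l),\quad \pi^h(s_{k-1})=\pi(s_{i-1}),\quad \pi^h(s_l)=\pi(s_j),$$ and if $j=k-1$ then $$\pi^h(s_{i-1})=\pi(s_j),\quad \pi^h(s_j)=\pi(s_l),\quad \pi^h(s_l)=\pi(s_{i-1}).$$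
   Context: Permutations of $[n]=\{1,\dots,n\}$ are multiplied as composition of maps, $(\sigma\tau)(x)=\sigma(\tau(x))$. A plane permutation on $[n]$ is a pair $(s,\pi)$ where $s=(s_0s_1\cdots s_{n-1})$ is an $n$-cycle on $[n]$, written with a fixed starting element $s_0$, and $\pi$ is an arbitrary permutation of $[n]$; its diagonal is $D=s\circ\pi^{-1}$. For $h=(i,j,k,l)$ with $i\le j<k\le l$ and $\{i,j,k,l\}\subset[n-1]$, let $s^h$ be the $n$-cycle $(s_0,\dots,s_{i-1},s_k,\dots,s_l,s_{j+1},\dots,s_{k-1},s_i,\dots,s_j,s_{l+1},\dots,s_{n-1})$ obtained by interchanging the blocks $s_i\cdots s_j$ and $s_k\cdots s_l$ (when $k=j+1$ the middle block is empty), and let $\pi^h=D^{-1}\circ s^h$, so that $(s^h,\pi^h)$ is a plane permutation with the same diagonal $D$. Write $(s^h,\pi^h)=\chi_h\circ(s,\pi)$. *)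

theory Defs
  imports "HOL-Combinatorics.Combinatorics"
begin

text \<open>An n-cycle s = (s_0 s_1 ... s_{n-1}) on [n] with fixed starting element is represented
  by the distinct list [s_0, ..., s_{n-1}] with set {1..n}; as a map it is
  cycle_of_list, sending s_r to s_{(r+1) mod n}.\<close>

definition block_interchange :: "'a list \<Rightarrow> nat \<Rightarrow> nat \<Rightarrow> nat \<Rightarrow> nat \<Rightarrow> 'a list" where
  "block_interchange s i j k l =
     take i s @ drop k (take (Suc l) s) @ drop (Suc j) (take k s)
       @ drop i (take (Suc j) s) @ drop (Suc l) s"

definition diagonal :: "nat list \<Rightarrow> (nat \<Rightarrow> nat) \<Rightarrow> nat \<Rightarrow> nat" where
  "diagonal s \<pi> = cycle_of_list s \<circ> inv \<pi>"

definition chi :: "nat \<times> nat \<times> nat \<times> nat \<Rightarrow> nat list \<times> (nat \<Rightarrow> nat) \<Rightarrow> nat list \<times> (nat \<Rightarrow> nat)" where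
  "chi h sp = (case h of (i, j, k, l) \<Rightarrow> case sp of (s, \<pi>) \<Rightarrow>
      (block_interchange s i j k l,
       inv (diagonal s \<pi>) \<circ> cycle_of_list (block_interchange s i j k l)))"

end

theory Submission
  imports Defs
begin

text \<open>Since \<open>\<pi>\<^sup>h = D\<inverse> \<circ> s\<^sup>h = \<pi> \<circ> s\<inverse> \<circ> s\<^sup>h\<close>, the value of \<open>\<pi>\<^sup>h\<close> at \<open>x\<close> is \<open>\<pi>\<close> applied to
  the \<open>s\<close>-predecessor of the \<open>s\<^sup>h\<close>-successor of \<open>x\<close>. Interchanging two blocks keeps the
  successor of every element except the cut points s_(i-1), s_j, s_(k-1), s_l, so \<open>\<pi>\<^sup>h\<close>
  agrees with \<open>\<pi>\<close> elsewhere; at a cut point the new successor is the first element of the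
  block that now follows it, and its \<open>s\<close>-predecessor gives the stated value.\<close>

lemma cycle_of_list_nth:
  assumes "distinct xs" and "p < length xs"
  shows "cycle_of_list xs (xs ! p) = xs ! (Suc p mod length xs)"
proof -
  have "map (cycle_of_list xs) xs = rotate1 xs"
    using cyclic_rotation[OF assms(1), of 1] by simp
  then have "cycle_of_list xs (xs ! p) = rotate1 xs ! p"
    by (metis assms(2) nth_map)
  then show ?thesis
    using assms(2) by (simp add: nth_rotate1)
qed

lemma inv_diagonal:
  assumes "bij \<pi>"
  shows "inv (diagonal s \<pi>) = \<pi> \<circ> inv (cycle_of_list s)"
proof -
  have "bij (cycle_of_list s)"
    using cycle_permutes permutes_bij by blast
  then show ?thesis
    unfolding diagonal_def using assms by (simp add: o_inv_distrib bij_imp_bij_inv inv_inv_eq)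
qed

definition block_interchange_index :: "nat \<Rightarrow> nat \<Rightarrow> nat \<Rightarrow> nat \<Rightarrow> nat \<Rightarrow> nat" where
  "block_interchange_index i j k l p =
     (if p < i then p
      else if p \<le> i + (l - k) then p - i + k
      else if p < i + (l - j) then p - (i + (l - k)) + j
      else if p \<le> l then p - (i + (l - j)) + i
      else p)"

definition block_interchange_position :: "nat \<Rightarrow> nat \<Rightarrow> nat \<Rightarrow> nat \<Rightarrow> nat \<Rightarrow> nat" where
  "block_interchange_position i j k l r =
     (if r < i then r
      else if r \<le> j then r + (l - j)
      else if r < k then r - j + i + (l - k)
      else if r \<le> l then r - k + i
      else r)"

definition block_interchange_successor :: "nat \<Rightarrow> nat \<Rightarrow> nat \<Rightarrow> nat \<Rightarrow> nat \<Rightarrow> nat \<Rightarrow> nat" where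
  "block_interchange_successor n i j k l r =
     block_interchange_index i j k l (Suc (block_interchange_position i j k l r) mod n)"

context
  fixes i j k l :: nat
  assumes bounds: "i \<le> j" "j < k" "k \<le> l"
begin

lemma mset_block_interchange: "mset (block_interchange s i j k l) = mset s"
proof -
  have take_drop: "take a xs @ drop a (take b xs) = take b xs" if "a \<le> b" for a b and xs :: "'a list"
    using that by (metis append_take_drop_id min.absorb1 take_take)
  have "s = take i s @ drop i (take (Suc j) s) @ drop (Suc j) (take k s)
          @ drop k (take (Suc l) s) @ drop (Suc l) s"
    using bounds by (simp add: take_drop flip: append_assoc)
  then have "mset s = mset (take i s @ drop i (take (Suc j) s) @ drop (Suc j) (take k s)
                        @ drop k (take (Suc l) s) @ drop (Suc l) s)"
    by simp
  then show ?thesis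
    by (simp add: block_interchange_def ac_simps)
qed

lemma distinct_block_interchange: "distinct (block_interchange s i j k l) = distinct s"
  by (metis mset_block_interchange mset_eq_imp_distinct_iff)

lemma length_block_interchange: "l < length s \<Longrightarrow> length (block_interchange s i j k l) = length s"
  using bounds by (simp add: block_interchange_def)

lemma block_interchange_index_first: "p < i \<Longrightarrow> block_interchange_index i j k l p = p"
  by (simp add: block_interchange_index_def)

lemma block_interchange_index_second:
  "i \<le> p \<Longrightarrow> p \<le> i + (l - k) \<Longrightarrow> block_interchange_index i j k l p = p - i + k"
  by (simp add: block_interchange_index_def)

lemma block_interchange_index_third:
  "i + (l - k) < p \<Longrightarrow> p < i + (l - j) \<Longrightarrow>
    block_interchange_index i j k l p = p - (i + (l - k)) + j"
  using bounds unfolding block_interchange_index_def by auto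

lemma block_interchange_index_fourth:
  "i + (l - j) \<le> p \<Longrightarrow> p \<le> l \<Longrightarrow> block_interchange_index i j k l p = p - (i + (l - j)) + i"
  using bounds unfolding block_interchange_index_def by auto

lemma block_interchange_index_last: "l < p \<Longrightarrow> block_interchange_index i j k l p = p"
  using bounds unfolding block_interchange_index_def by auto

lemmas block_interchange_index_regions =
  block_interchange_index_first block_interchange_index_second block_interchange_index_third
  block_interchange_index_fourth block_interchange_index_last

lemma nth_block_interchange:
  assumes "l < length s" and "p < length s"
  shows "block_interchange s i j k l ! p = s ! block_interchange_index i j k l p"
proof -
  have lengths: "length (take i s) = i" "length (drop k (take (Suc l) s)) = Suc (l - k)"
    "length (drop (Suc j) (take k s)) = k - Suc j" "length (drop i (take (Suc j) s)) = Suc (j - i)"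
    using assms bounds by auto
  consider "p < i" | "i \<le> p" "p \<le> i + (l - k)" | "i + (l - k) < p" "p < i + (l - j)"
    | "i + (l - j) \<le> p" "p \<le> l" | "l < p"
    by linarith
  then show ?thesis
    unfolding block_interchange_def using assms bounds
    by cases (auto simp: nth_append lengths block_interchange_index_regions
        intro!: arg_cong[where f = "(!) s"])
qed

lemma block_interchange_index_position:
  "block_interchange_index i j k l (block_interchange_position i j k l r) = r"
  using bounds unfolding block_interchange_position_def
  by (auto simp: block_interchange_index_regions)

lemma block_interchange_position_less:
  "l < n \<Longrightarrow> r < n \<Longrightarrow> block_interchange_position i j k l r < n"
  using bounds unfolding block_interchange_position_def by auto

lemma cycle_of_list_block_interchange_nth:
  assumes "distinct s" and "length s = n" and "l < n" and "r < n"
  shows "cycle_of_list (block_interchange s i j k l) (s ! r) = s ! block_interchange_successor n i j k l r"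
proof -
  define p where "p = block_interchange_position i j k l r"
  have "p < n"
    using assms by (simp add: p_def block_interchange_position_less)
  have nth_sh: "block_interchange s i j k l ! q = s ! block_interchange_index i j k l q" if "q < n" for q
    using assms that by (simp add: nth_block_interchange)
  have "s ! r = block_interchange s i j k l ! p"
    using nth_sh[OF \<open>p < n\<close>] by (simp add: p_def block_interchange_index_position)
  then show ?thesis
    using cycle_of_list_nth[of "block_interchange s i j k l" p] assms \<open>p < n\<close> nth_sh
    by (simp add: distinct_block_interchange length_block_interchange
        block_interchange_successor_def p_def)
qed

lemma block_interchange_successor_eq:
  assumes "0 < i" and "l < n" and "r < n" and "r \<notin> {i - 1, j, k - 1, l}"
  shows "block_interchange_successor n i j k l r = Suc r mod n"
proof -
  consider "Suc r < i" | "i \<le> r" "r < j" | "j < r" "Suc r < k" | "k \<le> r" "r < l"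
    | "l < r" "Suc r < n" | "Suc r = n"
    using assms bounds by fastforce
  then show ?thesis
    using assms bounds unfolding block_interchange_successor_def block_interchange_position_def
    by cases (auto simp: block_interchange_index_regions)
qed

lemma block_interchange_successor_cut_points:
  assumes "0 < i" and "l < n"
  shows "block_interchange_successor n i j k l (i - 1) = k"
    and "block_interchange_successor n i j k l j = Suc l mod n"
    and "Suc j < k \<Longrightarrow> block_interchange_successor n i j k l (k - 1) = i"
    and "Suc j < k \<Longrightarrow> block_interchange_successor n i j k l l = Suc j"
    and "Suc j = k \<Longrightarrow> block_interchange_successor n i j k l l = i"
  using assms bounds
  by (simp_all add: block_interchange_successor_def block_interchange_position_def
      block_interchange_index_second block_interchange_index_third block_interchange_index_fourth)
    (cases "Suc l = n";
      simp add: block_interchange_index_first block_interchange_index_last)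

lemma chi_perm_nth:
  assumes "distinct s" and "length s = n" and "bij \<pi>" and "l < n"
    and "(sh, \<pi>h) = chi (i, j, k, l) (s, \<pi>)"
    and "r < n" and "t < n" and "block_interchange_successor n i j k l r = Suc t mod n"
  shows "\<pi>h (s ! r) = \<pi> (s ! t)"
proof -
  have \<pi>h: "\<pi>h = \<pi> \<circ> inv (cycle_of_list s) \<circ> cycle_of_list (block_interchange s i j k l)"
    using assms(5) inv_diagonal[OF assms(3)] by (simp add: chi_def)
  have "cycle_of_list (block_interchange s i j k l) (s ! r) = cycle_of_list s (s ! t)"
    using cycle_of_list_block_interchange_nth[OF assms(1,2,4,6)] cycle_of_list_nth[OF assms(1), of t]
      assms(2,7,8) by simp
  then show ?thesis
    by (simp add: \<pi>h) (metis bij_is_inj cycle_permutes inv_f_f permutes_bij)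
qed

end

theorem lemma1:
  fixes n i j k l :: nat and s sh :: "nat list" and \<pi> \<pi>h :: "nat \<Rightarrow> nat"
  assumes "distinct s" and "set s = {1..n}" and "length s = n"
    and "\<pi> permutes {1..n}"
    and "1 \<le> i" and "i \<le> j" and "j < k" and "k \<le> l" and "l \<le> n - 1"
    and "(sh, \<pi>h) = chi (i, j, k, l) (s, \<pi>)"
  shows "(\<forall>r. r < n \<and> r \<notin> {i - 1, j, k - 1, l} \<longrightarrow> \<pi>h (s ! r) = \<pi> (s ! r))
    \<and> (j + 1 < k \<longrightarrow>
         \<pi>h (s ! (i - 1)) = \<pi> (s ! (k - 1)) \<and> \<pi>h (s ! j) = \<pi> (s ! l)
       \<and> \<pi>h (s ! (k - 1)) = \<pi> (s ! (i - 1)) \<and> \<pi>h (s ! l) = \<pi> (s ! j))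
    \<and> (j = k - 1 \<longrightarrow>
         \<pi>h (s ! (i - 1)) = \<pi> (s ! j) \<and> \<pi>h (s ! j) = \<pi> (s ! l)
       \<and> \<pi>h (s ! l) = \<pi> (s ! (i - 1)))"
proof -
  have h: "i \<le> j" "j < k" "k \<le> l" "l < n" and "0 < i"
    using assms by auto
  note step = chi_perm_nth[OF h(1-3) assms(1,3) permutes_bij[OF assms(4)] h(4) assms(10)]
  note cut = block_interchange_successor_cut_points[OF h(1-3) \<open>0 < i\<close> h(4)]
  have "\<pi>h (s ! r) = \<pi> (s ! r)" if "r < n" and "r \<notin> {i - 1, j, k - 1, l}" for r
    using step[OF that(1) that(1)] block_interchange_successor_eq[OF h(1-3) \<open>0 < i\<close> h(4) that]
    by simp
  moreover have "\<pi>h (s ! (i - 1)) = \<pi> (s ! (k - 1))"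
    using step[of "i - 1" "k - 1"] cut(1) h by simp
  moreover have "\<pi>h (s ! j) = \<pi> (s ! l)"
    using step[of j l] cut(2) h by simp
  moreover have "\<pi>h (s ! (k - 1)) = \<pi> (s ! (i - 1))" if "j + 1 < k"
    using step[of "k - 1" "i - 1"] cut(3) h that \<open>0 < i\<close> by simp
  moreover have "\<pi>h (s ! l) = \<pi> (s ! j)" if "j + 1 < k"
    using step[of l j] cut(4) h that by simp
  moreover have "\<pi>h (s ! l) = \<pi> (s ! (i - 1))" if "j = k - 1"
    using step[of l "i - 1"] cut(5) h that \<open>0 < i\<close> by simp
  ultimately show ?thesis
    using h by auto
qed

end
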